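(* Let $\mathcal M,\widehat{\mathcal M}\subset\mathbb R^D$ be closed embedded submanifolds with $\mathrm{reach}(\mathcal M)\ge\zeta_{\min}$, $\mathrm{reach}(\widehat{\mathcal M})\ge\zeta_{\min}$ and $d_H(\mathcal M,\widehat{\mathcal M})\le\varepsilon$, for some $\zeta_{\min}>0$ and $\varepsilon\in(0,\zeta_{\min}/4)$. Fix $r\in(0,\zeta_{\min}-2\varepsilon)$ and let $\pi,\hat\pi$ be the nearest-point projections onto $\mathcal M$ and $\widehat{\mathcal M}$ on $\mathcal T_{\zeta_{\min}}(\mathcal M)$ and $\mathcal T_{\zeta_{\min}}(\widehat{\mathcal M})$ respectively. Then for every $x\in\mathcal T_r(\mathcal M)$, both $\pi(x)$ and $\hat\pi(x)$ are well defined and \[\|\pi(x)-\hat\pi(x)\|\le\varepsilon+2\sqrt{\frac{\operatorname{dist}(x,\mathcal M)\varepsilon+\varepsilon^2}{1-(\operatorname{dist}(x,\mathcal M)+\varepsilon)/\zeta_{\min}}}.\] Consequently $\sup_{x\in\mathcal T_r(\mathcal M)}\|\pi(x)-\hat\pi(x)\|\le\varepsilon+2\sqrt{\frac{r\varepsilon+\varepsilon^2}{1-(r+\varepsilon)/\zeta_{\min}}}\lesssim_{\zeta_{\min},r}\sqrt\varepsilon$.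
   Context: Reach: largest $r$ such that every point at distance $<r$ has a unique nearest point. $\mathcal T_r(\mathcal M):=\{x:\operatorname{dist}(x,\mathcal M)<r\}$. $d_H$ is the Hausdorff distance. *)

theory Defs
  imports "HOL-Analysis.Analysis"
begin

text \<open>C-infinity smoothness of a map between Euclidean spaces on an open set U:
  there is a family D of iterated directional derivatives (D [] = f), each of which is
  Frechet differentiable on U, the derivative of D vs at x being h \<mapsto> D (h # vs) x.\<close>
definition smooth_on :: "('a::euclidean_space \<Rightarrow> 'b::euclidean_space) \<Rightarrow> 'a set \<Rightarrow> bool" where
  "smooth_on f U \<longleftrightarrow> (\<exists>D :: 'a list \<Rightarrow> 'a \<Rightarrow> 'b. (\<forall>x\<in>U. D [] x = f x) \<and>
      (\<forall>vs. \<forall>x\<in>U. (D vs has_derivative (\<lambda>h. D (h # vs) x)) (at x)))"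

definition embedded_submanifold :: "'a::euclidean_space set \<Rightarrow> bool" where
  "embedded_submanifold M \<longleftrightarrow> (\<exists>d. \<forall>p\<in>M. \<exists>U V (\<phi>::'a \<Rightarrow> 'a) \<psi> L.
      open U \<and> p \<in> U \<and> open V \<and> \<phi> ` U = V \<and> \<psi> ` V = U \<and>
      (\<forall>x\<in>U. \<psi> (\<phi> x) = x) \<and> (\<forall>y\<in>V. \<phi> (\<psi> y) = y) \<and>
      smooth_on \<phi> U \<and> smooth_on \<psi> V \<and>
      subspace L \<and> dim L = d \<and> \<phi> ` (U \<inter> M) = V \<inter> L)"

definition reach :: "'a::euclidean_space set \<Rightarrow> ereal" where
  "reach M = Sup {ereal r | r. r \<ge> 0 \<and>
      (\<forall>x. infdist x M < r \<longrightarrow> (\<exists>!p. p \<in> M \<and> dist x p = infdist x M))}"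

definition tube :: "real \<Rightarrow> 'a::euclidean_space set \<Rightarrow> 'a set" where
  "tube r M = {x. infdist x M < r}"

text \<open>Nearest-point projection (meaningful where the nearest point is unique).\<close>
definition proj :: "'a::euclidean_space set \<Rightarrow> 'a \<Rightarrow> 'a" where
  "proj M x = (THE p. p \<in> M \<and> dist x p = infdist x M)"

definition hausdorff_dist :: "'a::euclidean_space set \<Rightarrow> 'a set \<Rightarrow> ereal" where
  "hausdorff_dist A B = max (SUP a\<in>A. ereal (infdist a B)) (SUP b\<in>B. ereal (infdist b A))"

end

theory Submission
  imports Defs
begin

text \<open>Reach at least \<zeta> makes nearest points unique at distance below \<zeta>, and a Brouwer
  fixed-point argument shows that a normal ray from p \<in> M keeps p as its nearest point up to
  length \<zeta>. This yields Federer's inequality 2 \<zeta> ((x - p) \<bullet> (y - p)) \<le> |x - p| |y - p|^2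
  for p = \<pi>(x) and all y \<in> M. Let q be the nearest point of Mh to x and y a nearest point of M
  to q, so |q - y| \<le> \<epsilon> and |x - y| \<le> d + 2\<epsilon> with d = dist(x, M). Expanding |x - y|^2
  around p and inserting Federer's inequality gives |y - p|^2 (1 - (d + \<epsilon>)/\<zeta>) \<le> 4 (d \<epsilon> + \<epsilon>^2),
  and |p - q| \<le> |p - y| + \<epsilon>.\<close>

lemma power2_norm_diff:
  fixes a b :: "'a::real_inner"
  shows "(norm (a - b))\<^sup>2 = (norm a)\<^sup>2 - 2 * (a \<bullet> b) + (norm b)\<^sup>2"
  using dot_norm_neg[of a b] by simp

lemma reach_imp_unique_nearest:
  fixes M :: "'a::euclidean_space set"
  assumes "ereal \<zeta> \<le> reach M" "infdist x M < \<zeta>"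
  shows "\<exists>!p. p \<in> M \<and> dist x p = infdist x M"
proof -
  have "ereal (infdist x M) < ereal \<zeta>" using assms(2) by simp
  then have "ereal (infdist x M) < reach M" using assms(1) by (rule order_less_le_trans)
  then obtain s where "ereal (infdist x M) < s" "s \<in> {ereal r | r. r \<ge> 0 \<and>
      (\<forall>x. infdist x M < r \<longrightarrow> (\<exists>!p. p \<in> M \<and> dist x p = infdist x M))}"
    unfolding reach_def less_Sup_iff by blast
  then show ?thesis by auto
qed

lemma proj_eqI:
  assumes "\<exists>!p. p \<in> M \<and> dist x p = infdist x M" "p \<in> M" "dist x p = infdist x M"
  shows "proj M x = p"
  unfolding proj_def using the1_equality[OF assms(1)] assms(2,3) by blast

lemma proj_nearest:
  assumes "\<exists>!p. p \<in> M \<and> dist x p = infdist x M"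
  shows "proj M x \<in> M \<and> dist x (proj M x) = infdist x M"
  unfolding proj_def using assms by (rule theI')

lemma reach_proj_nearest:
  fixes M :: "'a::euclidean_space set"
  assumes "ereal \<zeta> \<le> reach M" "infdist x M < \<zeta>"
  shows "proj M x \<in> M \<and> dist x (proj M x) = infdist x M"
  using proj_nearest reach_imp_unique_nearest[OF assms] .

lemma infdist_segment_to_nearest:
  fixes M :: "'a::euclidean_space set"
  assumes "closed M" "M \<noteq> {}" "b \<in> M" "dist w b = infdist w M" "0 \<le> l" "l \<le> 1"
  shows "infdist (b + l *\<^sub>R (w - b)) M = l * dist w b"
proof -
  let ?z = "b + l *\<^sub>R (w - b)"
  have "w - ?z = (1 - l) *\<^sub>R (w - b)" by (simp add: algebra_simps)
  then have wz: "dist w ?z = (1 - l) * dist w b" using assms(6) by (simp add: dist_norm)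
  obtain y where y: "y \<in> M" "infdist ?z M = dist ?z y"
    using infdist_attains_inf[OF assms(1,2)] by blast
  have "infdist w M \<le> dist w ?z + dist ?z y"
    using infdist_le[OF y(1), of w] dist_triangle[of w y ?z] by linarith
  then have "l * dist w b \<le> infdist ?z M" using wz y assms(4) by (simp add: algebra_simps)
  moreover have "infdist ?z M \<le> l * dist w b"
    using infdist_le[OF assms(3), of ?z] assms(5) by (simp add: dist_norm)
  ultimately show ?thesis by linarith
qed

lemma continuous_on_proj:
  fixes M :: "'a::euclidean_space set"
  assumes "closed M" "M \<noteq> {}" "compact S"
    and unique: "\<forall>w\<in>S. \<exists>!b. b \<in> M \<and> dist w b = infdist w M"
  shows "continuous_on S (proj M)"
proof -
  obtain a where a: "a \<in> M" using assms(2) by blast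
  obtain R where R: "\<forall>x\<in>S. norm x \<le> R" using compact_imp_bounded[OF assms(3)] bounded_pos by blast
  define T where "T = M \<inter> cball 0 (2 * R + norm a)"
  have "compact T" unfolding T_def by (simp add: assms(1) closed_Int_compact)
  have nearest: "proj M w \<in> M \<and> dist w (proj M w) = infdist w M" if "w \<in> S" for w
    using unique proj_nearest that by blast
  have "proj M \<in> S \<rightarrow> T"
  proof
    fix w assume w: "w \<in> S"
    have "norm (proj M w) \<le> norm w + dist w (proj M w)"
      by (metis dist_norm norm_minus_commute norm_triangle_sub)
    also have "\<dots> \<le> norm w + dist w a" using nearest[OF w] infdist_le[OF a] by simp
    also have "\<dots> \<le> 2 * R + norm a"
      using bspec[OF R w] norm_triangle_ineq4[of w a] unfolding dist_norm by linarith
    finally show "proj M w \<in> T" unfolding T_def using nearest[OF w] by simp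
  qed
  have "(\<lambda>x. (x, proj M x)) ` S = (S \<times> T) \<inter> {z. dist (fst z) (snd z) = infdist (fst z) M}"
    using \<open>proj M \<in> S \<rightarrow> T\<close> nearest unique proj_eqI[of M] unfolding T_def by fastforce
  moreover have "closed {z::'a \<times> 'a. dist (fst z) (snd z) = infdist (fst z) M}"
    by (intro closed_Collect_eq continuous_intros)
  ultimately have "closedin (top_of_set (S \<times> T)) ((\<lambda>x. (x, proj M x)) ` S)"
    by (simp add: closedin_closed_Int)
  then show ?thesis using continuous_closed_graph_eq[OF \<open>compact T\<close> \<open>proj M \<in> S \<rightarrow> T\<close>] by simp
qed

lemma brouwer_normal_fixpoint:
  fixes M :: "'a::euclidean_space set"
  assumes "closed M" "M \<noteq> {}" "ereal \<zeta> \<le> reach M" "0 < \<eta>"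
    and "\<forall>w\<in>cball z \<eta>. 0 < infdist w M \<and> infdist w M < \<zeta>"
  obtains w where "w \<in> cball z \<eta>" "w = z + \<eta> *\<^sub>R ((w - proj M w) /\<^sub>R norm (w - proj M w))"
proof -
  define S where "S = cball z \<eta>"
  have unique: "\<forall>w\<in>S. \<exists>!b. b \<in> M \<and> dist w b = infdist w M"
    using reach_imp_unique_nearest[OF assms(3)] assms(5) by (simp add: S_def)
  have norm_pos: "norm (w - proj M w) > 0" if "w \<in> S" for w
    using proj_nearest[of M w] unique assms(5) that by (simp add: S_def dist_norm)
  define F where "F w = z + \<eta> *\<^sub>R ((w - proj M w) /\<^sub>R norm (w - proj M w))" for w
  have "continuous_on S F"
    unfolding F_def using norm_pos
    by (intro continuous_intros continuous_on_proj[OF assms(1,2) _ unique]) (auto simp: S_def)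
  moreover have "F \<in> S \<rightarrow> S"
    using norm_pos assms(4) by (auto simp: F_def S_def dist_norm)
  ultimately obtain w where "w \<in> S" "F w = w"
    using brouwer[of S F] assms(4) by (auto simp: S_def)
  then show ?thesis using that by (simp add: S_def F_def)
qed

text \<open>Let w be the fixed point above for z = p + t u. Then z lies on the segment from \<pi> w to w,
  so \<pi> w is also the nearest point of z, hence equals p, which forces w = p + (t + \<eta>) u.\<close>

lemma infdist_normal_ray_step:
  fixes M :: "'a::euclidean_space set"
  assumes "closed M" "M \<noteq> {}" "ereal \<zeta> \<le> reach M"
    and "p \<in> M" "norm u = 1" "0 < \<eta>" "2 * \<eta> \<le> t" "t + \<eta> < \<zeta>"
    and "infdist (p + t *\<^sub>R u) M = t"
  shows "infdist (p + (t + \<eta>) *\<^sub>R u) M = t + \<eta>"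
proof -
  define z where "z = p + t *\<^sub>R u"
  have infdist_ball: "\<eta> \<le> infdist w M \<and> infdist w M < \<zeta>" if "w \<in> cball z \<eta>" for w
    using that infdist_triangle_abs[of z M w] assms(7-9)
    by (auto simp: z_def dist_commute abs_le_iff)
  then obtain w where w: "w \<in> cball z \<eta>" "w = z + \<eta> *\<^sub>R ((w - proj M w) /\<^sub>R norm (w - proj M w))"
    using brouwer_normal_fixpoint[OF assms(1-3,6), of z] assms(6) by force
  define b where "b = proj M w"
  define \<delta> where "\<delta> = infdist w M"
  define \<nu> where "\<nu> = (w - b) /\<^sub>R \<delta>"
  have "b \<in> M" "dist w b = \<delta>"
    using reach_proj_nearest[OF assms(3)] infdist_ball[OF w(1)] by (auto simp: b_def \<delta>_def)
  have "\<eta> \<le> \<delta>" using infdist_ball[OF w(1)] by (simp add: \<delta>_def)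
  have "norm \<nu> = 1" using \<open>dist w b = \<delta>\<close> \<open>\<eta> \<le> \<delta>\<close> assms(6) by (simp add: \<nu>_def dist_norm)
  have w_eq: "w = z + \<eta> *\<^sub>R \<nu>"
    using w(2) \<open>dist w b = \<delta>\<close> by (simp add: \<nu>_def b_def dist_norm)
  have "w - b = \<delta> *\<^sub>R \<nu>" using \<open>\<eta> \<le> \<delta>\<close> assms(6) by (simp add: \<nu>_def)
  then have z_eq: "z = b + (\<delta> - \<eta>) *\<^sub>R \<nu>" using w_eq by (simp add: algebra_simps)
  have "infdist z M = \<delta> - \<eta>"
  proof -
    have "z = b + ((\<delta> - \<eta>) / \<delta>) *\<^sub>R (w - b)"
      using z_eq \<open>w - b = \<delta> *\<^sub>R \<nu>\<close> \<open>\<eta> \<le> \<delta>\<close> assms(6) by simp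
    moreover have "0 \<le> (\<delta> - \<eta>) / \<delta>" "(\<delta> - \<eta>) / \<delta> \<le> 1" "0 < \<delta>"
      using \<open>\<eta> \<le> \<delta>\<close> assms(6) by auto
    ultimately show ?thesis
      using infdist_segment_to_nearest[OF assms(1,2) \<open>b \<in> M\<close>, of w] \<open>dist w b = \<delta>\<close>
      by (simp add: \<delta>_def)
  qed
  moreover have "dist z b = \<delta> - \<eta>" using z_eq \<open>norm \<nu> = 1\<close> \<open>\<eta> \<le> \<delta>\<close> by (simp add: dist_norm)
  moreover have "dist z p = t" using assms(5-7) by (simp add: z_def dist_norm)
  ultimately have "b = p"
    using reach_imp_unique_nearest[OF assms(3), of z] \<open>b \<in> M\<close> assms(4,6,8,9)
    by (auto simp: z_def)
  have "t = \<delta> - \<eta>" using \<open>infdist z M = \<delta> - \<eta>\<close> assms(9) by (simp add: z_def)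
  then have "t *\<^sub>R u = t *\<^sub>R \<nu>" using z_eq \<open>b = p\<close> by (simp add: z_def)
  then have "u = \<nu>" using assms(6,7) by simp
  then have "w = p + (t + \<eta>) *\<^sub>R u" using w_eq by (simp add: z_def algebra_simps)
  then show ?thesis using \<open>t = \<delta> - \<eta>\<close> by (simp add: \<delta>_def)
qed

lemma infdist_normal_ray:
  fixes M :: "'a::euclidean_space set"
  assumes "closed M" "M \<noteq> {}" "ereal \<zeta> \<le> reach M"
    and "p \<in> M" "norm u = 1" "0 < d" "d \<le> T" "T < \<zeta>"
    and "infdist (p + d *\<^sub>R u) M = d"
  shows "infdist (p + T *\<^sub>R u) M = T"
proof -
  define \<eta> where "\<eta> = min d (\<zeta> - T) / 2"
  have \<eta>: "0 < \<eta>" "2 * \<eta> \<le> d" "T + \<eta> < \<zeta>" using assms(6-8) by (auto simp: \<eta>_def min_def field_simps)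
  have "infdist (p + min T (d + real n * \<eta>) *\<^sub>R u) M = min T (d + real n * \<eta>)" for n
  proof (induction n)
    case 0
    show ?case using assms(7,9) by (simp add: min_absorb2)
  next
    case (Suc n)
    define t where "t = min T (d + real n * \<eta>)"
    define t' where "t' = min T (d + real (Suc n) * \<eta>)"
    have "t \<le> t'" "t' \<le> t + \<eta>" "d \<le> t" "t' \<le> T"
      using assms(7) \<eta>(1) by (auto simp: t_def t'_def min_def algebra_simps)
    show ?case
    proof (cases "t = t'")
      case True
      then show ?thesis using Suc.IH by (simp add: t_def t'_def)
    next
      case False
      have "0 < t' - t" "2 * (t' - t) \<le> t" "t + (t' - t) < \<zeta>"
        using False \<open>t \<le> t'\<close> \<open>t' \<le> t + \<eta>\<close> \<open>d \<le> t\<close> \<open>t' \<le> T\<close> \<eta> assms(8) by auto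
      moreover have "infdist (p + t *\<^sub>R u) M = t" using Suc.IH by (simp add: t_def)
      ultimately have "infdist (p + (t + (t' - t)) *\<^sub>R u) M = t + (t' - t)"
        by (rule infdist_normal_ray_step[OF assms(1-5)])
      then show ?thesis by (simp add: t'_def)
    qed
  qed
  moreover obtain n where "T - d < real n * \<eta>" using reals_Archimedean3[OF \<eta>(1)] by blast
  ultimately show ?thesis by (metis add.commute diff_less_eq less_eq_real_def min_absorb1)
qed

lemma normal_ray_inner_le:
  fixes M :: "'a::euclidean_space set"
  assumes "closed M" "M \<noteq> {}" "ereal \<zeta> \<le> reach M"
    and "p \<in> M" "dist x p = infdist x M" "x \<noteq> p" "dist x p \<le> T" "T < \<zeta>" "y \<in> M"
  shows "2 * T * ((x - p) \<bullet> (y - p)) \<le> dist x p * (norm (y - p))\<^sup>2"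
proof -
  define d where "d = dist x p"
  define u where "u = (x - p) /\<^sub>R d"
  define N where "N = norm (y - p)"
  have "0 < d" using assms(6) by (simp add: d_def)
  then have "0 < T" using assms(7) unfolding d_def by linarith
  have "norm u = 1" using \<open>0 < d\<close> by (simp add: u_def d_def dist_norm)
  have x_eq: "x = p + d *\<^sub>R u" using \<open>0 < d\<close> by (simp add: u_def)
  have "infdist (p + d *\<^sub>R u) M = d" using x_eq assms(5) by (simp add: d_def)
  then have "T = infdist (p + T *\<^sub>R u) M"
    using infdist_normal_ray[OF assms(1-4) \<open>norm u = 1\<close> \<open>0 < d\<close>] assms(7,8) by (simp add: d_def)
  also have "\<dots> \<le> norm (T *\<^sub>R u - (y - p))"
    using infdist_le[OF assms(9), of "p + T *\<^sub>R u"] by (simp add: dist_norm algebra_simps)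
  finally have "T\<^sup>2 \<le> (norm (T *\<^sub>R u - (y - p)))\<^sup>2"
    using \<open>0 < T\<close> by (intro power_mono) auto
  also have "\<dots> = T\<^sup>2 - 2 * T * (u \<bullet> (y - p)) + N\<^sup>2"
    using power2_norm_diff[of "T *\<^sub>R u" "y - p"] \<open>norm u = 1\<close> \<open>0 < T\<close>
    by (simp add: N_def power_mult_distrib)
  finally have "2 * T * (u \<bullet> (y - p)) \<le> N\<^sup>2" by simp
  then have "d * (2 * T * (u \<bullet> (y - p))) \<le> d * N\<^sup>2"
    using \<open>0 < d\<close> by (simp add: mult_left_mono)
  moreover have "(x - p) \<bullet> (y - p) = d * (u \<bullet> (y - p))" using x_eq by simp
  ultimately show ?thesis by (simp add: N_def d_def mult_ac)
qed

text \<open>One direction of Federer's characterisation of reach (Federer 1959, Thm. 4.18).\<close>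

lemma reach_inner_le:
  fixes M :: "'a::euclidean_space set"
  assumes "closed M" "M \<noteq> {}" "ereal \<zeta> \<le> reach M"
    and "p \<in> M" "dist x p = infdist x M" "infdist x M < \<zeta>" "y \<in> M"
  shows "2 * \<zeta> * ((x - p) \<bullet> (y - p)) \<le> dist x p * (norm (y - p))\<^sup>2"
proof (cases "x = p \<or> (x - p) \<bullet> (y - p) \<le> 0")
  case True
  moreover have "0 < \<zeta>" using assms(6) infdist_nonneg[of x M] by linarith
  ultimately have "2 * \<zeta> * ((x - p) \<bullet> (y - p)) \<le> 0" by (auto simp: mult_nonneg_nonpos)
  moreover have "0 \<le> dist x p * (norm (y - p))\<^sup>2" by simp
  ultimately show ?thesis by linarith
next
  case False
  define I where "I = (x - p) \<bullet> (y - p)"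
  have "0 < I" using False by (simp add: I_def)
  have "\<zeta> \<le> dist x p * (norm (y - p))\<^sup>2 / (2 * I)"
  proof (rule dense_le_bounded)
    show "dist x p < \<zeta>" using assms(5,6) by simp
    fix T assume "dist x p < T" "T < \<zeta>"
    then show "T \<le> dist x p * (norm (y - p))\<^sup>2 / (2 * I)"
      using normal_ray_inner_le[OF assms(1-5) _ _ _ assms(7), of T] False \<open>0 < I\<close>
      by (subst pos_le_divide_eq) (auto simp: I_def mult_ac)
  qed
  then show ?thesis using \<open>0 < I\<close> by (subst (asm) pos_le_divide_eq) (auto simp: I_def mult_ac)
qed

lemma dist_nearest_point_le:
  fixes M :: "'a::euclidean_space set"
  assumes "closed M" "M \<noteq> {}" "ereal \<zeta> \<le> reach M"
    and "p \<in> M" "dist x p = infdist x M"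
    and "dist x q \<le> infdist x M + \<epsilon>" "infdist q M \<le> \<epsilon>" "infdist x M + \<epsilon> < \<zeta>"
  shows "dist p q \<le> \<epsilon> + 2 * sqrt ((infdist x M * \<epsilon> + \<epsilon>\<^sup>2) / (1 - (infdist x M + \<epsilon>) / \<zeta>))"
proof -
  define d where "d = infdist x M"
  define D where "D = 1 - (d + \<epsilon>) / \<zeta>"
  obtain y where "y \<in> M" "infdist q M = dist q y"
    using infdist_attains_inf[OF assms(1,2), of q] by blast
  then have y: "y \<in> M" "dist q y \<le> \<epsilon>" using assms(7) by simp_all
  define I where "I = (x - p) \<bullet> (y - p)"
  define N where "N = norm (y - p)"
  define K where "K = (d * \<epsilon> + \<epsilon>\<^sup>2) / D"
  have "0 \<le> d" by (simp add: d_def infdist_nonneg)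
  have "0 \<le> \<epsilon>" using infdist_nonneg[of q M] assms(7) by linarith
  have "d + \<epsilon> < \<zeta>" using assms(8) by (simp add: d_def)
  then have "0 < \<zeta>" "(d + \<epsilon>) / \<zeta> < 1" using \<open>0 \<le> d\<close> \<open>0 \<le> \<epsilon>\<close> by auto
  then have "0 < D" by (simp add: D_def)
  have "dist x y \<le> d + 2 * \<epsilon>"
    using dist_triangle[of x y q] assms(6) y(2) by (simp add: d_def dist_commute)
  then have "(dist x y)\<^sup>2 \<le> (d + 2 * \<epsilon>)\<^sup>2" by (rule power_mono) simp
  moreover have "(dist x y)\<^sup>2 = d\<^sup>2 - 2 * I + N\<^sup>2"
    using power2_norm_diff[of "x - p" "y - p"] assms(5) by (simp add: dist_norm I_def N_def d_def)
  moreover have "(d + 2 * \<epsilon>)\<^sup>2 = d\<^sup>2 + 4 * (d * \<epsilon> + \<epsilon>\<^sup>2)"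
    by (simp add: power2_eq_square algebra_simps)
  ultimately have "N\<^sup>2 - 2 * I \<le> 4 * (d * \<epsilon> + \<epsilon>\<^sup>2)" by linarith
  moreover have "2 * \<zeta> * I \<le> d * N\<^sup>2"
    using reach_inner_le[OF assms(1-5) _ y(1)] assms(5) \<open>d + \<epsilon> < \<zeta>\<close> \<open>0 \<le> \<epsilon>\<close>
    by (simp add: I_def N_def d_def)
  then have "2 * I \<le> d / \<zeta> * N\<^sup>2" using \<open>0 < \<zeta>\<close> by (simp add: field_simps)
  moreover have "d / \<zeta> * N\<^sup>2 \<le> (d + \<epsilon>) / \<zeta> * N\<^sup>2"
    using \<open>0 < \<zeta>\<close> \<open>0 \<le> \<epsilon>\<close> by (intro mult_right_mono divide_right_mono) auto
  moreover have "N\<^sup>2 * D = N\<^sup>2 - (d + \<epsilon>) / \<zeta> * N\<^sup>2" by (simp add: D_def algebra_simps)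
  ultimately have "N\<^sup>2 * D \<le> 4 * (d * \<epsilon> + \<epsilon>\<^sup>2)" by linarith
  then have "N\<^sup>2 \<le> 4 * K" using \<open>0 < D\<close> by (simp add: K_def pos_le_divide_eq)
  then have "N \<le> sqrt (4 * K)" by (rule real_le_rsqrt)
  then have "N \<le> 2 * sqrt K" by (simp add: real_sqrt_mult)
  moreover have "dist p q \<le> N + \<epsilon>"
    using dist_triangle[of p q y] y(2) by (simp add: N_def dist_norm norm_minus_commute dist_commute)
  ultimately show ?thesis by (simp add: K_def D_def d_def)
qed

lemma infdist_le_hausdorff_dist:
  assumes "hausdorff_dist A B \<le> ereal \<epsilon>" "a \<in> A"
  shows "infdist a B \<le> \<epsilon>"
proof -
  have "ereal (infdist a B) \<le> (SUP a\<in>A. ereal (infdist a B))" using assms(2) by (rule SUP_upper)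
  also have "\<dots> \<le> hausdorff_dist A B" unfolding hausdorff_dist_def by (rule max.cobounded1)
  also have "\<dots> \<le> ereal \<epsilon>" by (rule assms(1))
  finally show ?thesis by simp
qed

lemma hausdorff_dist_commute: "hausdorff_dist A B = hausdorff_dist B A"
  unfolding hausdorff_dist_def by (rule max.commute)

lemma infdist_le_infdist_add_hausdorff_dist:
  assumes "hausdorff_dist A B \<le> ereal \<epsilon>" "A \<noteq> {}"
  shows "infdist x B \<le> infdist x A + \<epsilon>"
proof -
  have "infdist x B - \<epsilon> \<le> dist x a" if "a \<in> A" for a
    using infdist_triangle[of x B a] infdist_le_hausdorff_dist[OF assms(1) that] by simp
  then have "infdist x B - \<epsilon> \<le> infdist x A"
    unfolding infdist_notempty[OF assms(2)] by (rule cINF_greatest[OF assms(2)])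
  then show ?thesis by simp
qed

lemma sqrt_proj_bound_mono:
  fixes d r \<epsilon> \<zeta> :: real
  assumes "0 \<le> d" "d \<le> r" "0 \<le> \<epsilon>" "r + \<epsilon> < \<zeta>"
  shows "sqrt ((d * \<epsilon> + \<epsilon>\<^sup>2) / (1 - (d + \<epsilon>) / \<zeta>)) \<le> sqrt ((r * \<epsilon> + \<epsilon>\<^sup>2) / (1 - (r + \<epsilon>) / \<zeta>))"
proof -
  have "0 < \<zeta>" "0 < 1 - (r + \<epsilon>) / \<zeta>" using assms by (auto simp: field_simps)
  moreover have "1 - (r + \<epsilon>) / \<zeta> \<le> 1 - (d + \<epsilon>) / \<zeta>"
    using assms(2) \<open>0 < \<zeta>\<close> by (simp add: divide_right_mono)
  ultimately show ?thesis
    using assms by (intro real_sqrt_le_mono frac_le) (auto intro: mult_right_mono)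
qed

lemma norm_proj_diff_le:
  fixes M Mh :: "'a::euclidean_space set"
  assumes "closed M" "M \<noteq> {}" "ereal \<zeta> \<le> reach M" "ereal \<zeta> \<le> reach Mh"
    and "hausdorff_dist M Mh \<le> ereal \<epsilon>" "0 \<le> \<epsilon>" "infdist x M + 2 * \<epsilon> < \<zeta>"
  shows "infdist x Mh < \<zeta>"
    and "norm (proj M x - proj Mh x)
      \<le> \<epsilon> + 2 * sqrt ((infdist x M * \<epsilon> + \<epsilon>\<^sup>2) / (1 - (infdist x M + \<epsilon>) / \<zeta>))"
proof -
  have "infdist x M < \<zeta>" using assms(6,7) by linarith
  then have p: "proj M x \<in> M" "dist x (proj M x) = infdist x M"
    using reach_proj_nearest[OF assms(3)] by blast+
  have near: "infdist x Mh \<le> infdist x M + \<epsilon>"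
    by (rule infdist_le_infdist_add_hausdorff_dist[OF assms(5,2)])
  then show "infdist x Mh < \<zeta>" using assms(6,7) by linarith
  then have q: "proj Mh x \<in> Mh" "dist x (proj Mh x) = infdist x Mh"
    using reach_proj_nearest[OF assms(4)] by blast+
  have "infdist (proj Mh x) M \<le> \<epsilon>"
    using infdist_le_hausdorff_dist[of Mh M \<epsilon>] assms(5) q(1) by (simp add: hausdorff_dist_commute)
  then show "norm (proj M x - proj Mh x)
      \<le> \<epsilon> + 2 * sqrt ((infdist x M * \<epsilon> + \<epsilon>\<^sup>2) / (1 - (infdist x M + \<epsilon>) / \<zeta>))"
    using dist_nearest_point_le[OF assms(1-3) p] q(2) near assms(6,7) by (simp add: dist_norm)
qed

theorem lemmaE3:
  fixes M Mh :: "'a::euclidean_space set" and \<zeta> \<epsilon> r :: real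
  assumes "embedded_submanifold M" and "closed M" and "M \<noteq> {}"
      and "embedded_submanifold Mh" and "closed Mh" and "Mh \<noteq> {}"
      and "\<zeta> > 0" and "reach M \<ge> ereal \<zeta>" and "reach Mh \<ge> ereal \<zeta>"
      and "hausdorff_dist M Mh \<le> ereal \<epsilon>"
      and "0 < \<epsilon>" and "\<epsilon> < \<zeta> / 4"
      and "0 < r" and "r < \<zeta> - 2 * \<epsilon>"
  shows "(\<forall>x \<in> tube r M.
            x \<in> tube \<zeta> M \<and> x \<in> tube \<zeta> Mh \<and>
            (\<exists>!p. p \<in> M \<and> dist x p = infdist x M) \<and>
            (\<exists>!p. p \<in> Mh \<and> dist x p = infdist x Mh) \<and>
            norm (proj M x - proj Mh x) \<le>
              \<epsilon> + 2 * sqrt ((infdist x M * \<epsilon> + \<epsilon>\<^sup>2) / (1 - (infdist x M + \<epsilon>) / \<zeta>)))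
       \<and> (SUP x \<in> tube r M. norm (proj M x - proj Mh x))
            \<le> \<epsilon> + 2 * sqrt ((r * \<epsilon> + \<epsilon>\<^sup>2) / (1 - (r + \<epsilon>) / \<zeta>))"
proof -
  define B where "B d = \<epsilon> + 2 * sqrt ((d * \<epsilon> + \<epsilon>\<^sup>2) / (1 - (d + \<epsilon>) / \<zeta>))" for d
  have pointwise: "x \<in> tube \<zeta> M \<and> x \<in> tube \<zeta> Mh \<and>
      (\<exists>!p. p \<in> M \<and> dist x p = infdist x M) \<and> (\<exists>!p. p \<in> Mh \<and> dist x p = infdist x Mh) \<and>
      norm (proj M x - proj Mh x) \<le> B (infdist x M)" if "x \<in> tube r M" for x
  proof -
    have "infdist x M + 2 * \<epsilon> < \<zeta>" using that assms(14) by (simp add: tube_def)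
    with norm_proj_diff_le[OF assms(2,3,8,9,10)] show ?thesis
      using reach_imp_unique_nearest[OF assms(8)] reach_imp_unique_nearest[OF assms(9)] assms(11)
      by (simp add: tube_def B_def)
  qed
  have "B (infdist x M) \<le> B r" if "x \<in> tube r M" for x
    using that assms(11,14) sqrt_proj_bound_mono[of "infdist x M" r \<epsilon> \<zeta>]
    by (simp add: B_def tube_def infdist_nonneg)
  moreover have "M \<subseteq> tube r M" using assms(13) by (auto simp: tube_def infdist_zero)
  then have "tube r M \<noteq> {}" using assms(3) by blast
  ultimately have "(SUP x \<in> tube r M. norm (proj M x - proj Mh x)) \<le> B r"
    using pointwise by (meson cSUP_least order_trans)
  with pointwise show ?thesis unfolding B_def by blast
qed

end
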